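(* Let $n\ge2$ and let $f(u)=\sum_{l=0}^\infty a_l(u-u_0)^l$ be a power series in the polar $n$-complex variable $u$ with polar $n$-complex coefficients, converging absolutely on an open set of $\mathbb{R}^n$ (identifying $u$ with $(x_0,\dots,x_{n-1})$) that contains a closed piecewise smooth loop $\Gamma$ together with a surface spanning $\Gamma$. Then $\oint_\Gamma f(u)\,du=0$.
   Context: Polar $n$-complex numbers: $u=x_0+h_1x_1+\cdots+h_{n-1}x_{n-1}$, $x_j\in\mathbb{R}$, $h_0=1$, componentwise addition, bilinear multiplication $h_jh_k=h_{(j+k)\bmod n}$. For $f(u)=\sum_kh_kP_k(x_0,\dots,x_{n-1})$ and $du=\sum_kh_kdx_k$, the integral is defined componentwise: $\oint_\Gamma f(u)\,du=\sum_{k=0}^{n-1}h_k\oint_\Gamma\sum_{l=0}^{n-1}P_l\,dx_{(k-l)\bmod n}$. *)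

theory Defs
  imports "HOL-Analysis.Analysis"
begin

text \<open>Polar n-complex numbers are represented as vectors in real ^ 'n, where n = CARD('n).
  The components x_0, ..., x_{n-1} are indexed through a fixed enumeration pidx of the
  finite index type by {0..<n}.\<close>

definition pidx :: "nat \<Rightarrow> 'n::finite" where
  "pidx = (SOME f. bij_betw f {..<CARD('n)} (UNIV :: 'n set))"

definition pcomp :: "real ^ 'n::finite \<Rightarrow> nat \<Rightarrow> real" where
  "pcomp u j = u $ pidx j"

definition hunit :: "nat \<Rightarrow> real ^ 'n::finite" where
  "hunit j = axis (pidx j) 1"

definition pmul :: "real ^ 'n::finite \<Rightarrow> real ^ 'n \<Rightarrow> real ^ 'n" where
  "pmul u v = (\<Sum>j<CARD('n). \<Sum>k<CARD('n).
       (pcomp u j * pcomp v k) *\<^sub>R hunit ((j + k) mod CARD('n)))"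

primrec ppow :: "real ^ 'n::finite \<Rightarrow> nat \<Rightarrow> real ^ 'n" where
  "ppow u 0 = hunit 0"
| "ppow u (Suc l) = pmul u (ppow u l)"

definition pseries :: "(nat \<Rightarrow> real ^ 'n::finite) \<Rightarrow> real ^ 'n \<Rightarrow> real ^ 'n \<Rightarrow> real ^ 'n" where
  "pseries a u0 u = (\<Sum>l. pmul (a l) (ppow (u - u0) l))"

definition pseries_abs_conv :: "(nat \<Rightarrow> real ^ 'n::finite) \<Rightarrow> real ^ 'n \<Rightarrow> real ^ 'n \<Rightarrow> bool" where
  "pseries_abs_conv a u0 u \<longleftrightarrow> summable (\<lambda>l. norm (pmul (a l) (ppow (u - u0) l)))"

text \<open>The componentwise integral: the k-th component of the integral of f(u) du along g
  over [0,1] is the line integral of sum_l P_l dx_{(k-l) mod n}.\<close>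
definition has_pintegral ::
  "(real ^ 'n::finite \<Rightarrow> real ^ 'n) \<Rightarrow> (real \<Rightarrow> real ^ 'n) \<Rightarrow> real ^ 'n \<Rightarrow> bool" where
  "has_pintegral f g I \<longleftrightarrow>
     (\<forall>k<CARD('n).
        ((\<lambda>t. \<Sum>l<CARD('n). pcomp (f (g t)) l *
              pcomp (vector_derivative g (at t within {0..1}))
                    ((k + CARD('n) - l) mod CARD('n)))
          has_integral pcomp I k) {0..1})"

definition spanning_surface_in :: "(real ^ 'n::finite) set \<Rightarrow> (real \<Rightarrow> real ^ 'n) \<Rightarrow> bool" where
  "spanning_surface_in U g \<longleftrightarrow>
     (\<exists>s :: complex \<Rightarrow> real ^ 'n. continuous_on (cball 0 1) s \<and> s ` cball 0 1 \<subseteq> U \<and>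
        (\<forall>t\<in>{0..1}. s (cis (2 * pi * t)) = g t))"

end

theory Submission
  imports Defs
begin

(* The characters pchar j (j < n), i.e. the discrete Fourier coefficients
   x |-> sum_k x_k omega^(j k) with omega = cis (2 pi / n), are ring homomorphisms from the
   polar n-complex numbers to the complex numbers which jointly determine x. Through them the
   power series behaves like n complex power series: absolute convergence on the open set U gives
   a summable majorant near every point of U, so the termwise primitive
   sum_l a_l (u - u0)^(l+1) / (l+1) is differentiable on U with derivative h |-> f(u) h.
   The integral of f(u) du is the integral of f(g t) g'(t), the product taken in the polar
   n-complex numbers, hence the difference of the primitive at the endpoints of the closed
   path, i.e. zero. *)

lemma pidx_bij: "bij_betw (pidx :: nat \<Rightarrow> 'n::finite) {..<CARD('n)} UNIV"
proof -
  have "\<exists>f. bij_betw f {..<CARD('n)} (UNIV :: 'n set)"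
    using ex_bij_betw_nat_finite[of "UNIV :: 'n set"] by (auto simp: atLeast0LessThan)
  then show ?thesis
    unfolding pidx_def by (rule someI_ex)
qed

lemma pidx_eq_iff:
  "j < CARD('n) \<Longrightarrow> k < CARD('n) \<Longrightarrow> (pidx j :: 'n::finite) = pidx k \<longleftrightarrow> j = k"
  using pidx_bij[where 'n='n] unfolding bij_betw_def inj_on_def by auto

lemma ex_pidx_eq: "\<exists>k<CARD('n). pidx k = (i :: 'n::finite)"
  using pidx_bij[where 'n='n] unfolding bij_betw_def by (metis UNIV_I imageE lessThan_iff)

lemma sum_UNIV_pidx: "(\<Sum>i\<in>UNIV. f i) = (\<Sum>k<CARD('n). f (pidx k :: 'n::finite))"
  using sum.reindex_bij_betw[OF pidx_bij[where 'n='n], of f] by simp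

lemma pcomp_add [simp]: "pcomp (x + y) k = pcomp x k + pcomp y k"
  and pcomp_diff [simp]: "pcomp (x - y) k = pcomp x k - pcomp y k"
  and pcomp_scaleR [simp]: "pcomp (c *\<^sub>R x) k = c * pcomp x k"
  and pcomp_zero [simp]: "pcomp 0 k = 0"
  and pcomp_sum: "pcomp (sum f A) k = (\<Sum>i\<in>A. pcomp (f i) k)"
  by (auto simp: pcomp_def sum_component)

lemma pcomp_hunit:
  "j < CARD('n) \<Longrightarrow> m < CARD('n) \<Longrightarrow>
    pcomp (hunit j :: real ^ 'n::finite) m = (if j = m then 1 else 0)"
  by (auto simp: pcomp_def hunit_def axis_def pidx_eq_iff)

section \<open>Roots of unity and characters\<close>

definition prim_root :: "nat \<Rightarrow> complex" where
  "prim_root N = cis (2 * pi / real N)"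

lemma norm_prim_root [simp]: "norm (prim_root N) = 1"
  by (simp add: prim_root_def)

lemma prim_root_nonzero [simp]: "prim_root N \<noteq> 0"
  by (simp add: prim_root_def)

lemma cnj_prim_root: "cnj (prim_root N) = inverse (prim_root N)"
  by (simp add: prim_root_def cis_cnj)

lemma prim_root_power_card: "N > 0 \<Longrightarrow> prim_root N ^ N = 1"
  unfolding prim_root_def Complex.DeMoivre by simp

lemma prim_root_power_mod: "N > 0 \<Longrightarrow> prim_root N ^ (p mod N) = prim_root N ^ p"
  by (metis div_mult_mod_eq mult.commute mult_1 power_add power_mult power_one prim_root_power_card)

lemma prim_root_power_inj:
  assumes "a < N" "k < N" "prim_root N ^ a = prim_root N ^ k"
  shows "a = k"
proof -
  let ?w = "\<lambda>m. \<i> * complex_of_real (real m * (2 * pi / real N))"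
  have "exp (?w a) = exp (?w k)"
    using assms(3) unfolding prim_root_def Complex.DeMoivre by (simp only: cis_conv_exp)
  moreover have "\<bar>Im (?w a) - Im (?w k)\<bar> < 2 * pi"
  proof -
    have "Im (?w a) - Im (?w k) = (real a - real k) * (2 * pi / real N)"
      by (simp add: left_diff_distrib diff_divide_distrib)
    then have "\<bar>Im (?w a) - Im (?w k)\<bar> = \<bar>real a - real k\<bar> * (2 * pi / real N)"
      by (simp add: abs_mult)
    also have "\<dots> < real N * (2 * pi / real N)"
      using assms(1,2) by (intro mult_strict_right_mono) auto
    finally show ?thesis
      using assms(1) by simp
  qed
  ultimately have "?w a = ?w k"
    by (rule exp_complex_eqI[rotated])
  then show ?thesis
    using assms(1) by simp
qed

lemma sum_prim_root_powers:
  assumes "a < N" "k < N"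
  shows "(\<Sum>j<N. (prim_root N ^ a * cnj (prim_root N) ^ k) ^ j) = (if a = k then of_nat N else 0)"
proof -
  define r where "r = prim_root N ^ a * cnj (prim_root N) ^ k"
  have r_eq: "r = prim_root N ^ a / prim_root N ^ k"
    by (simp add: r_def cnj_prim_root power_inverse divide_inverse)
  have "r ^ N = (prim_root N ^ N) ^ a / (prim_root N ^ N) ^ k"
    by (simp add: r_eq power_divide mult.commute flip: power_mult)
  then have "r ^ N = 1"
    using assms by (simp add: prim_root_power_card)
  moreover have "r = 1 \<longleftrightarrow> a = k"
    using prim_root_power_inj[OF assms] by (auto simp: r_eq)
  ultimately have "(\<Sum>j<N. r ^ j) = (if a = k then of_nat N else 0)"
    by (auto simp: sum_gp_strict)
  then show ?thesis
    by (simp only: r_def)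
qed

definition pchar :: "nat \<Rightarrow> real ^ 'n::finite \<Rightarrow> complex" where
  "pchar j x = (\<Sum>k<CARD('n). complex_of_real (pcomp x k) * prim_root CARD('n) ^ (j * k))"

lemma pchar_add [simp]: "pchar j (x + y) = pchar j x + pchar j y"
  by (simp add: pchar_def sum.distrib algebra_simps)

lemma pchar_diff [simp]: "pchar j (x - y) = pchar j x - pchar j y"
  by (simp add: pchar_def sum_subtractf algebra_simps)

lemma pchar_scaleR [simp]: "pchar j (c *\<^sub>R x) = complex_of_real c * pchar j x"
  by (simp add: pchar_def sum_distrib_left algebra_simps)

lemma pchar_zero [simp]: "pchar j 0 = 0"
  by (simp add: pchar_def)

lemma pchar_sum: "pchar j (sum f A) = (\<Sum>i\<in>A. pchar j (f i))"
  by (induction A rule: infinite_finite_induct) auto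

lemma pchar_hunit:
  "p < CARD('n) \<Longrightarrow> pchar j (hunit p :: real ^ 'n::finite) = prim_root CARD('n) ^ (j * p)"
  by (simp add: pchar_def pcomp_hunit if_distrib if_distribR sum.delta cong: if_cong)

lemma pchar_one [simp]: "pchar j (hunit 0 :: real ^ 'n::finite) = 1"
  by (simp add: pchar_hunit)

lemma pchar_pmul [simp]: "pchar j (pmul x y :: real ^ 'n::finite) = pchar j x * pchar j y"
proof -
  let ?N = "CARD('n)" and ?\<omega> = "prim_root CARD('n)"
  have "?\<omega> ^ (j * ((l + k) mod ?N)) = ?\<omega> ^ (j * l) * ?\<omega> ^ (j * k)" for l k
  proof -
    have "?\<omega> ^ (j * ((l + k) mod ?N)) = ?\<omega> ^ (j * ((l + k) mod ?N) mod ?N)"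
      by (simp add: prim_root_power_mod)
    also have "\<dots> = ?\<omega> ^ (j * (l + k))"
      by (simp add: mod_mult_right_eq prim_root_power_mod)
    finally show ?thesis
      by (simp add: distrib_left power_add)
  qed
  then have "pchar j (pmul x y) = (\<Sum>l<?N. \<Sum>k<?N.
      (complex_of_real (pcomp x l) * ?\<omega> ^ (j * l)) * (complex_of_real (pcomp y k) * ?\<omega> ^ (j * k)))"
    by (simp add: pmul_def pchar_sum pchar_hunit mult_ac)
  then show ?thesis
    by (simp add: pchar_def sum_product)
qed

lemma pchar_ppow [simp]: "pchar j (ppow (x :: real ^ 'n::finite) l) = pchar j x ^ l"
  by (induction l) simp_all

lemma pcomp_eq_sum_pchar:
  assumes k: "k < CARD('n)"
  shows "complex_of_real (pcomp (x :: real ^ 'n::finite) k) =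
    (\<Sum>j<CARD('n). pchar j x * cnj (prim_root CARD('n)) ^ (j * k)) / of_nat CARD('n)"
proof -
  let ?N = "CARD('n)" and ?\<omega> = "prim_root CARD('n)"
  have "(\<Sum>j<?N. pchar j x * cnj ?\<omega> ^ (j * k)) =
      (\<Sum>l<?N. complex_of_real (pcomp x l) * (\<Sum>j<?N. (?\<omega> ^ l * cnj ?\<omega> ^ k) ^ j))"
    unfolding pchar_def sum_distrib_right sum_distrib_left
    by (subst sum.swap) (simp add: power_mult_distrib mult_ac flip: power_mult)
  also have "\<dots> = (\<Sum>l<?N. if l = k then complex_of_real (pcomp x l) * of_nat ?N else 0)"
    using k by (intro sum.cong refl) (simp add: sum_prim_root_powers)
  also have "\<dots> = complex_of_real (pcomp x k) * of_nat ?N"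
    using k by simp
  finally show ?thesis
    by simp
qed

lemma norm_le_sum_pchar: "norm (x :: real ^ 'n::finite) \<le> (\<Sum>j<CARD('n). norm (pchar j x))"
proof -
  let ?N = "CARD('n)"
  have abs_pcomp: "\<bar>pcomp x k\<bar> \<le> (\<Sum>j<?N. norm (pchar j x)) / ?N" if "k < ?N" for k
  proof -
    have "\<bar>pcomp x k\<bar> = norm (\<Sum>j<?N. pchar j x * cnj (prim_root ?N) ^ (j * k)) / ?N"
      by (metis norm_of_real norm_divide norm_of_nat pcomp_eq_sum_pchar[OF that])
    also have "\<dots> \<le> (\<Sum>j<?N. norm (pchar j x)) / ?N"
      by (intro divide_right_mono order.trans[OF norm_sum]) (simp_all add: norm_mult norm_power)
    finally show ?thesis .
  qed
  have "norm x \<le> (\<Sum>i\<in>UNIV. \<bar>x $ i\<bar>)"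
    by (rule norm_le_l1_cart)
  also have "\<dots> = (\<Sum>k<?N. \<bar>pcomp x k\<bar>)"
    by (simp add: sum_UNIV_pidx pcomp_def)
  also have "\<dots> \<le> (\<Sum>k<?N. (\<Sum>j<?N. norm (pchar j x)) / ?N)"
    by (intro sum_mono abs_pcomp) simp
  also have "\<dots> = (\<Sum>j<?N. norm (pchar j x))"
    by simp
  finally show ?thesis .
qed

lemma pchar_eqI:
  fixes x y :: "real ^ 'n::finite"
  assumes "\<And>j. j < CARD('n) \<Longrightarrow> pchar j x = pchar j y"
  shows "x = y"
  using norm_le_sum_pchar[of "x - y"] assms by simp

lemma norm_pchar_le: "norm (pchar j (x :: real ^ 'n::finite)) \<le> CARD('n) * norm x"
proof -
  have "norm (pchar j x) \<le> (\<Sum>k<CARD('n). norm (complex_of_real (pcomp x k) * prim_root CARD('n) ^ (j * k)))"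
    unfolding pchar_def by (rule norm_sum)
  also have "\<dots> \<le> (\<Sum>k<CARD('n). norm x)"
    by (intro sum_mono) (simp add: norm_mult norm_power pcomp_def component_le_norm_cart)
  finally show ?thesis
    by simp
qed

lemma pmul_one [simp]: "pmul (hunit 0) x = x" "pmul x (hunit 0) = (x :: real ^ 'n::finite)"
  by (rule pchar_eqI, simp)+

lemma bounded_bilinear_pmul: "bounded_bilinear (pmul :: real ^ 'n::finite \<Rightarrow> _)"
proof -
  have "pmul (x + z) y = pmul x y + pmul z y" "pmul y (x + z) = pmul y x + pmul y z"
    "pmul (c *\<^sub>R x) y = c *\<^sub>R pmul x y" "pmul y (c *\<^sub>R x) = c *\<^sub>R pmul y x"
    for x y z :: "real ^ 'n" and c
    by (rule pchar_eqI, simp add: algebra_simps)+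
  then have "bilinear (pmul :: real ^ 'n \<Rightarrow> _)"
    unfolding bilinear_def by (simp add: linearI)
  then show ?thesis
    by (rule bilinear_conv_bounded_bilinear[THEN iffD1])
qed

section \<open>A primitive of the power series\<close>

lemma has_derivative_ppow:
  "((\<lambda>x. ppow x (Suc l)) has_derivative (\<lambda>h. real (Suc l) *\<^sub>R pmul (ppow x l) h)) (at x)"
proof (induction l)
  case 0
  show ?case
    by (simp add: has_derivative_ident)
next
  case (Suc l)
  have "((\<lambda>x. pmul x (ppow x (Suc l))) has_derivative
      (\<lambda>h. pmul x (real (Suc l) *\<^sub>R pmul (ppow x l) h) + pmul h (ppow x (Suc l)))) (at x)"
    by (rule bounded_bilinear.FDERIV[OF bounded_bilinear_pmul has_derivative_ident Suc.IH])
  moreover have "pmul x (real (Suc l) *\<^sub>R pmul (ppow x l) h) + pmul h (ppow x (Suc l)) =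
      real (Suc (Suc l)) *\<^sub>R pmul (ppow x (Suc l)) h" for h
    by (rule pchar_eqI) (simp add: algebra_simps)
  ultimately show ?case
    by simp
qed

lemma ex_larger_pchar:
  fixes u u0 :: "real ^ 'n::finite"
  assumes "open U" "u \<in> U"
  shows "\<exists>w\<in>U. norm (pchar j (u - u0)) < norm (pchar j (w - u0))"
proof -
  obtain e where e: "e > 0" "ball u e \<subseteq> U"
    using assms open_contains_ball by blast
  define c where "c = pchar j (u - u0)"
  define v :: "real ^ 'n" where "v = (if c = 0 then hunit 0 else u - u0)"
  have "pchar j v \<noteq> 0"
    by (simp add: v_def c_def)
  then have "v \<noteq> 0"
    by auto
  define t where "t = e / (2 * norm v)"
  have t: "t > 0" "t * norm v < e"
    using e(1) \<open>v \<noteq> 0\<close> by (simp_all add: t_def)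
  then have "u + t *\<^sub>R v \<in> U"
    using e(2) by (auto simp: dist_norm)
  moreover have "norm c < norm (pchar j (u + t *\<^sub>R v - u0))"
  proof (cases "c = 0")
    case True
    then show ?thesis
      using t by (simp add: v_def c_def)
  next
    case False
    then have "pchar j (u + t *\<^sub>R v - u0) = complex_of_real (1 + t) * c"
      by (simp add: v_def c_def algebra_simps)
    then have "norm (pchar j (u + t *\<^sub>R v - u0)) = (1 + t) * norm c"
      using t by (simp only: norm_mult norm_of_real)
    then show ?thesis
      using False t by simp
  qed
  ultimately show ?thesis
    unfolding c_def by blast
qed

lemma summable_norm_pchar_terms:
  fixes a :: "nat \<Rightarrow> real ^ 'n::finite"
  assumes "pseries_abs_conv a u0 w"
  shows "summable (\<lambda>l. norm (pchar j (a l)) * norm (pchar j (w - u0)) ^ l)"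
proof (rule summable_comparison_test')
  show "summable (\<lambda>l. CARD('n) * norm (pmul (a l) (ppow (w - u0) l)))"
    using assms unfolding pseries_abs_conv_def by (rule summable_mult)
  show "norm (norm (pchar j (a l)) * norm (pchar j (w - u0)) ^ l) \<le>
      CARD('n) * norm (pmul (a l) (ppow (w - u0) l))" for l
    using norm_pchar_le[of j "pmul (a l) (ppow (w - u0) l)"] by (simp add: norm_mult norm_power)
qed

lemma pseries_locally_dominated:
  fixes a :: "nat \<Rightarrow> real ^ 'n::finite"
  assumes "open U" "\<And>v. v \<in> U \<Longrightarrow> pseries_abs_conv a u0 v" "u \<in> U"
  obtains \<epsilon> b where "\<epsilon> > 0" "summable b"
    "\<And>v l. v \<in> ball u \<epsilon> \<Longrightarrow> norm (pmul (a l) (ppow (v - u0) l)) \<le> b l"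
proof -
  let ?N = "CARD('n)"
  \<comment> \<open>In each character the series is a complex power series, dominated near u by its
    absolutely convergent values at a point w j that is farther from u0 in that character.\<close>
  have "\<forall>j. \<exists>w. w \<in> U \<and> norm (pchar j (u - u0)) < norm (pchar j (w - u0))"
    using ex_larger_pchar[OF assms(1,3)] by blast
  then obtain w where w: "\<And>j. w j \<in> U" "\<And>j. norm (pchar j (u - u0)) < norm (pchar j (w j - u0))"
    by metis
  define r where "r j = norm (pchar j (w j - u0))" for j
  define b where "b l = (\<Sum>j<?N. norm (pchar j (a l)) * r j ^ l)" for l
  have "summable (\<lambda>l. norm (pchar j (a l)) * r j ^ l)" for j
    unfolding r_def by (rule summable_norm_pchar_terms[OF assms(2)[OF w(1)]])
  then have "summable b"
    unfolding b_def by (intro summable_sum) auto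
  have "\<forall>\<^sub>F v in nhds u. \<forall>j\<in>{..<?N}. norm (pchar j (v - u0)) < r j"
  proof (intro eventually_ball_finite ballI)
    fix j
    have "continuous (at u) (\<lambda>v. norm (pchar j (v - u0)))"
      unfolding pchar_def pcomp_def by (intro continuous_intros)
    then have "((\<lambda>v. norm (pchar j (v - u0))) \<longlongrightarrow> norm (pchar j (u - u0))) (nhds u)"
      using tendsto_at_iff_tendsto_nhds[of "\<lambda>v. norm (pchar j (v - u0))" u]
      by (simp add: continuous_at)
    then show "\<forall>\<^sub>F v in nhds u. norm (pchar j (v - u0)) < r j"
      using w(2)[of j] unfolding r_def by (rule order_tendstoD(2))
  qed simp
  then obtain \<epsilon> where "\<epsilon> > 0"
    and near: "\<And>v j. dist v u < \<epsilon> \<Longrightarrow> j < ?N \<Longrightarrow> norm (pchar j (v - u0)) < r j"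
    unfolding eventually_nhds_metric by auto
  have "norm (pmul (a l) (ppow (v - u0) l)) \<le> b l" if "v \<in> ball u \<epsilon>" for v l
  proof -
    have "norm (pmul (a l) (ppow (v - u0) l)) \<le>
        (\<Sum>j<?N. norm (pchar j (a l)) * norm (pchar j (v - u0)) ^ l)"
      using norm_le_sum_pchar[of "pmul (a l) (ppow (v - u0) l)"] by (simp add: norm_mult norm_power)
    also have "\<dots> \<le> b l"
      unfolding b_def using near that
      by (intro sum_mono mult_left_mono power_mono) (auto simp: dist_commute less_imp_le)
    finally show ?thesis .
  qed
  with \<open>\<epsilon> > 0\<close> \<open>summable b\<close> show ?thesis
    using that by blast
qed

lemma uniform_limit_bounded_bilinear_left:
  fixes prod :: "'a::real_normed_vector \<Rightarrow> 'b::real_normed_vector \<Rightarrow> 'c::real_normed_vector"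
    and F :: "nat \<Rightarrow> 's \<Rightarrow> 'a"
  assumes "bounded_bilinear prod" "uniform_limit S F G sequentially" "e > 0"
  shows "\<forall>\<^sub>F N in sequentially. \<forall>x\<in>S. \<forall>h. norm (prod (F N x) h - prod (G x) h) \<le> e * norm h"
proof -
  obtain K where K: "K > 0" "\<And>x y. norm (prod x y) \<le> norm x * norm y * K"
    using bounded_bilinear.pos_bounded[OF assms(1)] by blast
  have "\<forall>\<^sub>F N in sequentially. \<forall>x\<in>S. dist (F N x) (G x) < e / K"
    using uniform_limitD[OF assms(2)] assms(3) K(1) by simp
  then show ?thesis
  proof (rule eventually_mono, intro ballI allI)
    fix N x h
    assume "\<forall>x\<in>S. dist (F N x) (G x) < e / K" "x \<in> S"
    then have close: "norm (F N x - G x) \<le> e / K"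
      by (simp add: dist_norm less_imp_le)
    have "norm (prod (F N x) h - prod (G x) h) = norm (prod (F N x - G x) h)"
      by (simp add: bounded_bilinear.diff_left[OF assms(1)])
    also have "\<dots> \<le> norm (F N x - G x) * norm h * K"
      by (rule K(2))
    also have "\<dots> \<le> e / K * norm h * K"
      using K(1) by (intro mult_right_mono close) auto
    also have "\<dots> = e * norm h"
      using K(1) by simp
    finally show "norm (prod (F N x) h - prod (G x) h) \<le> e * norm h" .
  qed
qed

definition pprim :: "(nat \<Rightarrow> real ^ 'n::finite) \<Rightarrow> real ^ 'n \<Rightarrow> real ^ 'n \<Rightarrow> real ^ 'n" where
  "pprim a u0 u = (\<Sum>l. (1 / real (Suc l)) *\<^sub>R pmul (a l) (ppow (u - u0) (Suc l)))"

lemma has_derivative_pprim_term: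
  "((\<lambda>x. (1 / real (Suc l)) *\<^sub>R pmul c (ppow (x - u0) (Suc l))) has_derivative
      pmul (pmul c (ppow (x - u0) l))) (at x)"
proof -
  have "((\<lambda>x. ppow (x - u0) (Suc l)) has_derivative
      (\<lambda>h. real (Suc l) *\<^sub>R pmul (ppow (x - u0) l) h)) (at x)"
    using has_derivative_compose[OF has_derivative_diff[OF has_derivative_ident has_derivative_const]
        has_derivative_ppow[of l "x - u0"]]
    by simp
  from has_derivative_scaleR_right[OF
      bounded_bilinear.FDERIV[OF bounded_bilinear_pmul has_derivative_const this]]
  have "((\<lambda>x. (1 / real (Suc l)) *\<^sub>R pmul c (ppow (x - u0) (Suc l))) has_derivative
      (\<lambda>h. (1 / real (Suc l)) *\<^sub>R (pmul c (real (Suc l) *\<^sub>R pmul (ppow (x - u0) l) h) +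
        pmul 0 (ppow (x - u0) (Suc l))))) (at x)" .
  moreover have "(1 / real (Suc l)) *\<^sub>R (pmul c (real (Suc l) *\<^sub>R pmul (ppow (x - u0) l) h) +
      pmul 0 (ppow (x - u0) (Suc l))) = pmul (pmul c (ppow (x - u0) l)) h" for h
  proof (rule pchar_eqI)
    have "1 + complex_of_nat l \<noteq> 0"
      by (metis add.commute of_nat_Suc of_nat_neq_0)
    then show "pchar j ((1 / real (Suc l)) *\<^sub>R (pmul c (real (Suc l) *\<^sub>R pmul (ppow (x - u0) l) h) +
        pmul 0 (ppow (x - u0) (Suc l)))) = pchar j (pmul (pmul c (ppow (x - u0) l)) h)" for j
      by (simp add: field_simps)
  qed
  ultimately show ?thesis
    by simp
qed

lemma summable_pprim_terms:
  fixes a :: "nat \<Rightarrow> real ^ 'n::finite"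
  assumes "pseries_abs_conv a u0 u"
  shows "summable (\<lambda>l. (1 / real (Suc l)) *\<^sub>R pmul (a l) (ppow (u - u0) (Suc l)))"
proof -
  obtain K where K: "\<And>x y :: real ^ 'n. norm (pmul x y) \<le> norm x * norm y * K"
    using bounded_bilinear.bounded[OF bounded_bilinear_pmul] by blast
  let ?T = "\<lambda>l. pmul (a l) (ppow (u - u0) l)"
  have "norm ((1 / real (Suc l)) *\<^sub>R pmul (a l) (ppow (u - u0) (Suc l))) \<le>
      norm (?T l) * norm (u - u0) * K" for l
  proof -
    have "(1 / real (Suc l)) *\<^sub>R pmul (a l) (ppow (u - u0) (Suc l)) =
        (1 / real (Suc l)) *\<^sub>R pmul (?T l) (u - u0)"
      by (rule pchar_eqI) simp
    then have "norm ((1 / real (Suc l)) *\<^sub>R pmul (a l) (ppow (u - u0) (Suc l))) =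
        (1 / real (Suc l)) * norm (pmul (?T l) (u - u0))"
      by simp
    also have "\<dots> \<le> norm (pmul (?T l) (u - u0))"
      by (rule mult_left_le_one_le) auto
    also have "\<dots> \<le> norm (?T l) * norm (u - u0) * K"
      by (rule K)
    finally show ?thesis .
  qed
  moreover have "summable (\<lambda>l. norm (?T l) * norm (u - u0) * K)"
    using assms unfolding pseries_abs_conv_def by (intro summable_mult2)
  ultimately show ?thesis
    by (rule summable_comparison_test'[rotated])
qed

lemma has_derivative_pprim:
  fixes a :: "nat \<Rightarrow> real ^ 'n::finite"
  assumes "open U" "\<And>v. v \<in> U \<Longrightarrow> pseries_abs_conv a u0 v" "u \<in> U"
  shows "(pprim a u0 has_derivative pmul (pseries a u0 u)) (at u)"
proof -
  obtain \<epsilon> b where \<epsilon>: "\<epsilon> > 0" and b: "summable b"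
    and bound: "\<And>v l. v \<in> ball u \<epsilon> \<Longrightarrow> norm (pmul (a l) (ppow (v - u0) l)) \<le> b l"
    using pseries_locally_dominated[OF assms] by blast
  let ?T = "\<lambda>l x. pmul (a l) (ppow (x - u0) l)"
  let ?P = "\<lambda>l x. (1 / real (Suc l)) *\<^sub>R pmul (a l) (ppow (x - u0) (Suc l))"
  have "uniform_limit (ball u \<epsilon>) (\<lambda>N x. \<Sum>l<N. ?T l x) (pseries a u0) sequentially"
    unfolding pseries_def by (rule Weierstrass_m_test[OF bound b])
  from uniform_limit_bounded_bilinear_left[OF bounded_bilinear_pmul this]
  have unif: "\<forall>\<^sub>F N in sequentially. \<forall>x\<in>ball u \<epsilon>. \<forall>h.
      norm ((\<Sum>l<N. pmul (?T l x) h) - pmul (pseries a u0 x) h) \<le> e * norm h" if "e > 0" for e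
    using that by (simp add: bounded_bilinear.sum_left[OF bounded_bilinear_pmul])
  have "\<exists>G. \<forall>x\<in>ball u \<epsilon>. (\<lambda>l. ?P l x) sums G x \<and>
      (G has_derivative pmul (pseries a u0 x)) (at x within ball u \<epsilon>)"
  proof (rule has_derivative_series[OF convex_ball])
    show "(?P l has_derivative pmul (?T l x)) (at x within ball u \<epsilon>)" for l x
      by (rule has_derivative_at_withinI[OF has_derivative_pprim_term])
    show "u \<in> ball u \<epsilon>"
      using \<epsilon> by simp
    show "(\<lambda>l. ?P l u) sums suminf (\<lambda>l. ?P l u)"
      by (rule summable_sums[OF summable_pprim_terms[OF assms(2)[OF assms(3)]]])
  qed (rule unif)
  then obtain G where G: "\<And>x. x \<in> ball u \<epsilon> \<Longrightarrow> (\<lambda>l. ?P l x) sums G x"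
    and dG: "(G has_derivative pmul (pseries a u0 u)) (at u within ball u \<epsilon>)"
    using \<epsilon> by force
  have "(G has_derivative pmul (pseries a u0 u)) (at u)"
    using dG \<epsilon> by (simp only: at_within_open[OF centre_in_ball[THEN iffD2] open_ball])
  then show ?thesis
  proof (rule has_derivative_transform_within_open[OF _ open_ball])
    show "u \<in> ball u \<epsilon>"
      using \<epsilon> by simp
    show "G x = pprim a u0 x" if "x \<in> ball u \<epsilon>" for x
      using G[OF that] unfolding pprim_def by (simp add: sums_iff)
  qed
qed

section \<open>Integrals along closed paths\<close>

lemma has_integral_derivative_along_path:
  fixes F :: "'a::real_normed_vector \<Rightarrow> 'b::banach"
  assumes "valid_path g" "path_image g \<subseteq> U" "\<And>u. u \<in> U \<Longrightarrow> (F has_derivative F' u) (at u)"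
  shows "((\<lambda>t. F' (g t) (vector_derivative g (at t within {0..1}))) has_integral
      F (pathfinish g) - F (pathstart g)) {0..1}"
proof -
  obtain S D where S: "finite S" and g_cont: "continuous_on {0..1} g"
    and g_deriv: "\<And>t. t \<in> {0..1} - S \<Longrightarrow> (g has_vector_derivative D t) (at t)"
    using assms(1)
    unfolding valid_path_def piecewise_C1_differentiable_on_def C1_differentiable_on_def
    by blast
  have gU: "g t \<in> U" if "t \<in> {0..1}" for t
    using assms(2) that unfolding path_image_def by blast
  show ?thesis
    unfolding pathfinish_def pathstart_def
  proof (rule fundamental_theorem_of_calculus_interior_strong[OF S])
    fix t
    assume "t \<in> {0<..<1} - S"
    then have t: "t \<in> {0..1} - S" "t \<in> {0<..<1}"
      by auto
    have "vector_derivative g (at t within {0..1}) = D t"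
      using vector_derivative_at_within_ivl[OF g_deriv[OF t(1)], of 0 1] t by auto
    moreover have "((F \<circ> g) has_derivative (F' (g t) \<circ> (\<lambda>s. s *\<^sub>R D t))) (at t)"
      using diff_chain_at[OF g_deriv[OF t(1), unfolded has_vector_derivative_def] assms(3)] gU t
      by auto
    moreover have "F' (g t) \<circ> (\<lambda>s. s *\<^sub>R D t) = (\<lambda>s. s *\<^sub>R F' (g t) (D t))"
      using linear.scaleR[OF has_derivative_linear[OF assms(3)[OF gU]]] t by (auto simp: o_def)
    ultimately show "((\<lambda>t. F (g t)) has_vector_derivative
        F' (g t) (vector_derivative g (at t within {0..1}))) (at t)"
      unfolding has_vector_derivative_def by (simp add: o_def)
  next
    have "continuous_on (g ` {0..1}) F"
      using gU by (intro continuous_at_imp_continuous_on ballI has_derivative_continuous[OF assms(3)]) auto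
    then show "continuous_on {0..1} (\<lambda>t. F (g t))"
      by (rule continuous_on_compose2[OF _ g_cont]) auto
  qed simp
qed

lemma pcomp_pmul:
  assumes m: "m < CARD('n)"
  shows "pcomp (pmul x y :: real ^ 'n::finite) m =
    (\<Sum>l<CARD('n). pcomp x l * pcomp y ((m + CARD('n) - l) mod CARD('n)))"
proof -
  let ?N = "CARD('n)"
  have mod_sum_iff: "(l + k) mod ?N = m \<longleftrightarrow> k = (m + ?N - l) mod ?N"
    if "l < ?N" "k < ?N" for l k
  proof -
    have mod_eq: "i mod ?N = (if i < ?N then i else i - ?N)" if "i < 2 * ?N" for i
      using that by (simp add: le_mod_geq)
    show ?thesis
      using that m mod_eq[of "l + k"] mod_eq[of "m + ?N - l"] by auto
  qed
  have "pcomp (pmul x y) m =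
      (\<Sum>l<?N. \<Sum>k<?N. pcomp x l * pcomp y k * (if (l + k) mod ?N = m then 1 else 0))"
    unfolding pmul_def pcomp_sum using m by (simp add: pcomp_hunit)
  also have "\<dots> = (\<Sum>l<?N. \<Sum>k<?N. if k = (m + ?N - l) mod ?N then pcomp x l * pcomp y k else 0)"
    by (intro sum.cong refl) (simp add: mod_sum_iff)
  also have "\<dots> = (\<Sum>l<?N. pcomp x l * pcomp y ((m + ?N - l) mod ?N))"
    by (intro sum.cong refl) (simp add: sum.delta)
  finally show ?thesis .
qed

lemma has_pintegral_iff_has_integral_pmul:
  fixes f :: "real ^ 'n::finite \<Rightarrow> real ^ 'n"
  shows "has_pintegral f g I \<longleftrightarrow>
    ((\<lambda>t. pmul (f (g t)) (vector_derivative g (at t within {0..1}))) has_integral I) {0..1}"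
proof -
  let ?h = "\<lambda>t. pmul (f (g t)) (vector_derivative g (at t within {0..1}))"
  have "(?h has_integral I) {0..1} \<longleftrightarrow> (\<forall>i. ((\<lambda>t. ?h t $ i) has_integral I $ i) {0..1})"
    by (simp add: has_integral_componentwise_iff[of ?h] Basis_vec_def cart_eq_inner_axis)
  also have "\<dots> \<longleftrightarrow> (\<forall>k<CARD('n). ((\<lambda>t. pcomp (?h t) k) has_integral pcomp I k) {0..1})"
    unfolding pcomp_def
  proof (intro iffI allI impI)
    fix i :: 'n
    assume components: "\<forall>k<CARD('n). ((\<lambda>t. ?h t $ pidx k) has_integral I $ pidx k) {0..1}"
    obtain k where "k < CARD('n)" "pidx k = i"
      using ex_pidx_eq by blast
    then show "((\<lambda>t. ?h t $ i) has_integral I $ i) {0..1}"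
      using components by blast
  qed blast
  also have "\<dots> \<longleftrightarrow> has_pintegral f g I"
    unfolding has_pintegral_def by (simp add: pcomp_pmul)
  finally show ?thesis ..
qed

theorem mainTheorem16:
  fixes a :: "nat \<Rightarrow> real ^ 'n::finite"
    and u0 :: "real ^ 'n"
    and U :: "(real ^ 'n) set"
    and g :: "real \<Rightarrow> real ^ 'n"
  assumes "CARD('n) \<ge> 2"
    and "open U"
    and "\<And>u. u \<in> U \<Longrightarrow> pseries_abs_conv a u0 u"
    and "valid_path g"
    and "pathfinish g = pathstart g"
    and "path_image g \<subseteq> U"
    and "spanning_surface_in U g"
  shows "has_pintegral (pseries a u0) g 0"
proof -
  have "(pprim a u0 has_derivative pmul (pseries a u0 u)) (at u)" if "u \<in> U" for u
    using has_derivative_pprim[OF assms(2,3) that] .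
  then have "((\<lambda>t. pmul (pseries a u0 (g t)) (vector_derivative g (at t within {0..1}))) has_integral
      pprim a u0 (pathfinish g) - pprim a u0 (pathstart g)) {0..1}"
    by (rule has_integral_derivative_along_path[OF assms(4,6)])
  then show ?thesis
    unfolding has_pintegral_iff_has_integral_pmul using assms(5) by simp
qed

end
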